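(* Let $\mathcal{T}_H$ be a partition of the box $\Omega\subset\mathbb{R}^3$ into axis-parallel rectangular boxes and let $\mathcal{T}_h$ be its uniform refinement (each box of $\mathcal{T}_H$ split into $8$ congruent boxes). Let $E$ be an interior edge of $\mathcal{T}_H$ parallel to the $x_1$-axis, let $T_E^1,\dots,T_E^4\in\mathcal{T}_H$ be the four coarse elements sharing $E$, put $D=\bigcup_{i=1}^4 T_E^i$, and let $v$ be the midpoint of $E$ (a vertex of $\mathcal{T}_h$). Let $e_1,\dots,e_6$ be the six edges of $\mathcal{T}_h$ having $v$ as an endpoint, where $e_{2i-1},e_{2i}$ are parallel to the $x_i$-axis ($i=1,2,3$). For each $i$ fix the tangential direction $\mathbf{t}_{x_i}$ of all fine edges parallel to the $x_i$-axis, oriented so that $v$ is the terminal endpoint of $e_{2i-1}$ (and the initial endpoint of $e_{2i}$). Let $\mathbf{u}\in N_h(D)$ (the lowest order hexahedral Nédélec space on the fine elements contained in $D$) satisfy: (i) $\mathbf{u}\cdot\mathbf{t}_{x_i}=-1$ on $e_{2i-1}$ and $\mathbf{u}\cdot\mathbf{t}_{x_i}=1$ on $e_{2i}$ for $i=1,2,3$; (ii) the tangential component of $\mathbf{u}$ vanishes on every other fine edge lying on $\bigcup_{i=1}^4\partial T_E^i$; (iii) for each $i=1,\dots,4$, $\int_{T_E^i}\mathbf{u}\cdot\mathbf{w}\,d\mathbf{x}=0$ for all $\mathbf{w}\in N_h^{T_E^i}$. Then $\nabla\times\mathbf{u}$ does not vanish identically.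
   Context: The lowest order Nédélec space on a set of axis-parallel boxes consists of vector fields in $H(\mathbf{curl})$ whose restriction to each box $T$ is of the form $(a_1+a_2x_2+a_3x_3+a_4x_2x_3,\; b_1+b_2x_3+b_3x_1+b_4x_3x_1,\; c_1+c_2x_1+c_3x_2+c_4x_1x_2)$; on each fine edge $e$ the tangential component $\mathbf{u}\cdot\mathbf{t}_e$ is constant, and these twelve edge values per box determine the field. For $T\in\mathcal{T}_H$, $N_h^T$ denotes the set of fields of the fine Nédélec space that vanish outside $T$ (equivalently, whose tangential components vanish on all fine edges not lying in the interior of $T$). *)

theory Defs
  imports "HOL-Analysis.Analysis"
begin

text \<open>Coarse breakpoints along axis m are cb m 0 < cb m 1 < ... ; the uniform refinement
  inserts midpoints.\<close>
definition refine :: "(nat \<Rightarrow> real) \<Rightarrow> nat \<Rightarrow> real" where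
  "refine c n = (if even n then c (n div 2) else (c (n div 2) + c (n div 2 + 1)) / 2)"

definition gvert :: "(3 \<Rightarrow> nat \<Rightarrow> real) \<Rightarrow> (3 \<Rightarrow> nat) \<Rightarrow> real^3" where
  "gvert G nu = (\<chi> m. G m (nu m))"

definition upper_idx :: "(3 \<Rightarrow> nat) \<Rightarrow> (3 \<Rightarrow> nat)" where
  "upper_idx nu = (\<lambda>m. Suc (nu m))"

definition gcell :: "(3 \<Rightarrow> nat \<Rightarrow> real) \<Rightarrow> (3 \<Rightarrow> nat) \<Rightarrow> (real^3) set" where
  "gcell G nu = cbox (gvert G nu) (gvert G (upper_idx nu))"

definition gcell_open :: "(3 \<Rightarrow> nat \<Rightarrow> real) \<Rightarrow> (3 \<Rightarrow> nat) \<Rightarrow> (real^3) set" where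
  "gcell_open G nu = box (gvert G nu) (gvert G (upper_idx nu))"

definition cell_idx :: "(3 \<Rightarrow> nat) \<Rightarrow> (3 \<Rightarrow> nat) set" where
  "cell_idx Nn = {nu. \<forall>m. nu m < Nn m}"

definition gedge :: "(3 \<Rightarrow> nat \<Rightarrow> real) \<Rightarrow> (3 \<Rightarrow> nat) \<Rightarrow> 3 \<Rightarrow> (real^3) set" where
  "gedge G nu n = closed_segment (gvert G nu) (gvert G (nu(n := Suc (nu n))))"

definition edge_idx :: "(3 \<Rightarrow> nat) \<Rightarrow> ((3 \<Rightarrow> nat) \<times> 3) set" where
  "edge_idx Nn = {(nu, n). nu n < Nn n \<and> (\<forall>m. nu m \<le> Nn m)}"

definition ned_poly :: "(real^3 \<Rightarrow> real^3) \<Rightarrow> bool" where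
  "ned_poly f \<longleftrightarrow> (\<exists>a1 a2 a3 a4 b1 b2 b3 b4 c1 c2 c3 c4 :: real. \<forall>x.
     f x = vector [a1 + a2 * x$2 + a3 * x$3 + a4 * x$2 * x$3,
                   b1 + b2 * x$3 + b3 * x$1 + b4 * x$3 * x$1,
                   c1 + c2 * x$1 + c3 * x$2 + c4 * x$1 * x$2])"

text \<open>u belongs to the Nedelec space on the grid (G, Nn), with local polynomial
  representatives p nu on the cells: on each open cell u is of Nedelec form, and
  the tangential components of neighbouring cells agree on common faces
  (H(curl)-conformity).\<close>
definition ned_rep :: "(3 \<Rightarrow> nat \<Rightarrow> real) \<Rightarrow> (3 \<Rightarrow> nat) \<Rightarrow>
    ((3 \<Rightarrow> nat) \<Rightarrow> real^3 \<Rightarrow> real^3) \<Rightarrow> (real^3 \<Rightarrow> real^3) \<Rightarrow> bool" where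
  "ned_rep G Nn p u \<longleftrightarrow>
     (\<forall>nu \<in> cell_idx Nn. ned_poly (p nu) \<and> (\<forall>x \<in> gcell_open G nu. u x = p nu x)) \<and>
     (\<forall>nu \<in> cell_idx Nn. \<forall>mu \<in> cell_idx Nn. \<forall>m. mu = nu(m := Suc (nu m)) \<longrightarrow>
        (\<forall>x \<in> gcell G nu \<inter> gcell G mu. \<forall>n. n \<noteq> m \<longrightarrow> p nu x $ n = p mu x $ n))"

definition pderiv3 :: "(real^3 \<Rightarrow> real^3) \<Rightarrow> 3 \<Rightarrow> 3 \<Rightarrow> real^3 \<Rightarrow> real" where
  "pderiv3 u i j x = deriv (\<lambda>t. u (x + t *\<^sub>R axis j 1) $ i) 0"

definition curl3 :: "(real^3 \<Rightarrow> real^3) \<Rightarrow> real^3 \<Rightarrow> real^3" where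
  "curl3 u x = vector [pderiv3 u 3 2 x - pderiv3 u 2 3 x,
                       pderiv3 u 1 3 x - pderiv3 u 3 1 x,
                       pderiv3 u 2 1 x - pderiv3 u 1 2 x]"

text \<open>Number of coarse cells along each axis in D: one along x1 (the edge E spans it),
  two along x2 and x3 (the four coarse elements around E).\<close>
definition ncD :: "3 \<Rightarrow> nat" where
  "ncD m = (if m = 1 then 1 else 2)"

definition nfD :: "3 \<Rightarrow> nat" where
  "nfD m = 2 * ncD m"

text \<open>Multi-index (fine grid) of the midpoint v of E.\<close>
definition vidx :: "3 \<Rightarrow> nat" where
  "vidx m = (if m = 1 then 1 else 2)"

definition coarse_of :: "(3 \<Rightarrow> nat) \<Rightarrow> (3 \<Rightarrow> nat)" where
  "coarse_of nu = (\<lambda>m. nu m div 2)"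

definition tdir :: "(3 \<Rightarrow> bool) \<Rightarrow> 3 \<Rightarrow> real^3" where
  "tdir pos i = (if pos i then axis i 1 else - axis i 1)"

text \<open>Fine edges at v parallel to axis i: e_{2i-1} (v is its terminal endpoint w.r.t. t)
  and e_{2i} (v is its initial endpoint), as (vertex index, axis) pairs.\<close>
definition e_in :: "(3 \<Rightarrow> bool) \<Rightarrow> 3 \<Rightarrow> (3 \<Rightarrow> nat) \<times> 3" where
  "e_in pos i = (if pos i then (vidx(i := vidx i - 1), i) else (vidx, i))"

definition e_out :: "(3 \<Rightarrow> bool) \<Rightarrow> 3 \<Rightarrow> (3 \<Rightarrow> nat) \<times> 3" where
  "e_out pos i = (if pos i then (vidx, i) else (vidx(i := vidx i - 1), i))"

definition tang_on_edge :: "(3 \<Rightarrow> nat \<Rightarrow> real) \<Rightarrow> (3 \<Rightarrow> nat) \<Rightarrow>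
    ((3 \<Rightarrow> nat) \<Rightarrow> real^3 \<Rightarrow> real^3) \<Rightarrow> real^3 \<Rightarrow> (3 \<Rightarrow> nat) \<times> 3 \<Rightarrow> real \<Rightarrow> bool" where
  "tang_on_edge G Nn p t e c \<longleftrightarrow>
     (\<forall>mu \<in> cell_idx Nn. gedge G (fst e) (snd e) \<subseteq> gcell G mu \<longrightarrow>
        (\<forall>x \<in> gedge G (fst e) (snd e). p mu x \<bullet> t = c))"

text \<open>Membership of w (with representatives q) in N_h^T for the coarse element T_kappa:
  a fine Nedelec field on D vanishing outside T_kappa whose tangential components vanish
  on the boundary of T_kappa (so that its extension by zero is H(curl)-conforming).\<close>
definition in_NhT :: "(3 \<Rightarrow> nat \<Rightarrow> real) \<Rightarrow> (3 \<Rightarrow> nat) \<Rightarrow> (3 \<Rightarrow> nat) \<Rightarrow>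
    ((3 \<Rightarrow> nat) \<Rightarrow> real^3 \<Rightarrow> real^3) \<Rightarrow> (real^3 \<Rightarrow> real^3) \<Rightarrow> bool" where
  "in_NhT cb Nn kappa q w \<longleftrightarrow>
     ned_rep (\<lambda>m. refine (cb m)) Nn q w \<and>
     (\<forall>nu \<in> cell_idx Nn. coarse_of nu \<noteq> kappa \<longrightarrow> q nu = (\<lambda>_. 0)) \<and>
     (\<forall>nu \<in> cell_idx Nn. coarse_of nu = kappa \<longrightarrow>
        (\<forall>m. \<forall>x \<in> gcell (\<lambda>m. refine (cb m)) nu.
           (x $ m = cb m (kappa m) \<or> x $ m = cb m (Suc (kappa m))) \<longrightarrow>
           (\<forall>n. n \<noteq> m \<longrightarrow> q nu x $ n = 0)))"

end

theory Submission
  imports Defs "HOL-Analysis.Equivalence_Lebesgue_Henstock_Integration"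
begin

text \<open>Let \<open>T\<close> be one of the four coarse elements around \<open>E\<close>. Its fine cells form two layers
  across the \<open>x\<^sub>2\<close>-direction, and the second one touches the midpoint \<open>v\<close> of \<open>E\<close>. On a fine cell
  the \<open>x\<^sub>2\<close>-component of a Nedelec field does not depend on \<open>x\<^sub>2\<close> and is bilinear in
  \<open>(x\<^sub>1, x\<^sub>3)\<close>, so on each layer it is the bilinear interpolant of its values on the fine edges in
  direction \<open>x\<^sub>2\<close>. By (i) and (ii) these vanish, except on the single interior edge of layer
  \<open>j\<close>, where \<open>u\<close> has some value \<open>\<beta>\<^sub>j\<close>, and, in the second layer, on the edge ending at
  \<open>v\<close>, where it is \<open>-1\<close>. Testing (iii) with the hat function \<open>\<phi>\<close> of the interior edge times
  \<open>e\<^sub>2\<close>, cut off to one layer, gives \<open>\<beta>\<^sub>0 = 0\<close>, and \<open>\<beta>\<^sub>1 \<noteq> 0\<close> because otherwise the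
  hat function \<open>\<psi>\<close> of the edge at \<open>v\<close> would satisfy \<open>\<integral> \<psi> \<phi> = 0\<close> although \<open>\<psi> \<phi> \<ge> 0\<close> is not
  identically zero. If \<open>curl u\<close> vanished, the discrete Stokes identity on the fine faces
  \<open>x\<^sub>1 = const\<close> through the interior edges would give \<open>\<beta>\<^sub>1 = -\<beta>\<^sub>0 = 0\<close>, the two layers having
  the same thickness in the uniform refinement.\<close>

section \<open>Tensor grids\<close>

lemma refine_strict:
  assumes c: "\<And>k. k < n \<Longrightarrow> c k < c (Suc k)" and k: "k < 2 * n"
  shows "refine c k < refine c (Suc k)"
proof -
  obtain q where q: "k = 2 * q \<or> k = 2 * q + 1" by (metis evenE oddE)
  with k have "c q < c (Suc q)" by (intro c) linarith
  with q show ?thesis by (auto simp: refine_def)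
qed

lemma gvert_nth [simp]: "gvert G nu $ m = G m (nu m)"
  by (simp add: gvert_def)

lemma mem_gcell_iff:
  "x \<in> gcell G nu \<longleftrightarrow> (\<forall>m. G m (nu m) \<le> x$m \<and> x$m \<le> G m (Suc (nu m)))"
  by (simp add: gcell_def mem_box_cart upper_idx_def)

lemma mem_gcell_open_iff:
  "x \<in> gcell_open G nu \<longleftrightarrow> (\<forall>m. G m (nu m) < x$m \<and> x$m < G m (Suc (nu m)))"
  by (simp add: gcell_open_def mem_box_cart upper_idx_def)

lemma gedge_component:
  assumes "x \<in> gedge G nu n" and "m \<noteq> n"
  shows "x$m = G m (nu m)"
proof -
  obtain t where "x = (1 - t) *\<^sub>R gvert G nu + t *\<^sub>R gvert G (nu(n := Suc (nu n)))"
    using assms(1) by (auto simp: gedge_def in_segment)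
  then have "x$m = (1 - t) * G m (nu m) + t * G m (nu m)"
    using assms(2) by simp
  then show ?thesis by (simp add: algebra_simps)
qed

definition gcell_centre :: "(3 \<Rightarrow> nat \<Rightarrow> real) \<Rightarrow> (3 \<Rightarrow> nat) \<Rightarrow> real^3" where
  "gcell_centre G nu = (\<chi> m. (G m (nu m) + G m (Suc (nu m))) / 2)"

locale strict_grid =
  fixes G :: "3 \<Rightarrow> nat \<Rightarrow> real" and Nn :: "3 \<Rightarrow> nat"
  assumes strict: "\<And>m k. k < Nn m \<Longrightarrow> G m k < G m (Suc k)"
begin

lemma grid_less: "a < b \<Longrightarrow> b \<le> Nn m \<Longrightarrow> G m a < G m b"
proof (induction b)
  case (Suc b)
  then show ?case
    using strict[of b m] by (cases "a < b") (auto simp: less_Suc_eq)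
qed simp

lemma grid_le: "a \<le> b \<Longrightarrow> b \<le> Nn m \<Longrightarrow> G m a \<le> G m b"
  using grid_less[of a b m] by (cases "a = b") auto

lemma gvert_mem_gcell:
  assumes "mu \<in> cell_idx Nn" and "\<forall>k. mu k \<le> nu k \<and> nu k \<le> Suc (mu k)"
  shows "gvert G nu \<in> gcell G mu"
  unfolding mem_gcell_iff
proof
  fix m
  have "mu m < Nn m" using assms(1) by (simp add: cell_idx_def)
  then show "G m (mu m) \<le> gvert G nu $ m \<and> gvert G nu $ m \<le> G m (Suc (mu m))"
    using spec[OF assms(2), of m] grid_le[of "mu m" "nu m" m] grid_le[of "nu m" "Suc (mu m)" m]
    by (simp add: gvert_def)
qed

lemma gedge_subset_gcell:
  assumes "mu \<in> cell_idx Nn" and "\<forall>k. mu k \<le> nu k \<and> nu k \<le> Suc (mu k)" and "nu n = mu n"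
  shows "gedge G nu n \<subseteq> gcell G mu"
  unfolding gedge_def
proof (rule closed_segment_subset)
  show "gvert G nu \<in> gcell G mu" by (rule gvert_mem_gcell[OF assms(1,2)])
  show "gvert G (nu(n := Suc (nu n))) \<in> gcell G mu"
    using assms by (intro gvert_mem_gcell) auto
qed (simp add: gcell_def convex_box)

lemma gcell_open_unique:
  assumes "nu \<in> cell_idx Nn" "mu \<in> cell_idx Nn" "x \<in> gcell_open G nu" "x \<in> gcell_open G mu"
  shows "nu = mu"
proof
  fix m
  have "nu m < Nn m" "mu m < Nn m" using assms(1,2) by (auto simp: cell_idx_def)
  moreover have "G m (nu m) < G m (Suc (mu m))" "G m (mu m) < G m (Suc (nu m))"
    using assms(3,4) unfolding mem_gcell_open_iff by (meson less_trans)+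
  ultimately show "nu m = mu m"
    using grid_le[of "Suc (nu m)" "mu m" m] grid_le[of "Suc (mu m)" "nu m" m] by linarith
qed

lemma gcell_centre_mem:
  assumes "nu \<in> cell_idx Nn"
  shows "gcell_centre G nu \<in> gcell_open G nu"
  unfolding mem_gcell_open_iff
proof
  fix m
  have "G m (nu m) < G m (Suc (nu m))" using assms strict by (simp add: cell_idx_def)
  then show "G m (nu m) < gcell_centre G nu $ m \<and> gcell_centre G nu $ m < G m (Suc (nu m))"
    by (simp add: gcell_centre_def)
qed

end


section \<open>Linear nodal functions on a grid interval\<close>

text \<open>The linear function on \<open>[c i, c (Suc i)]\<close> that is \<open>1\<close> at \<open>c i\<close> if \<open>a = i\<close>, and \<open>1\<close> at
  \<open>c (Suc i)\<close> for every other \<open>a\<close>; it vanishes at the other end point.\<close>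
definition nodal :: "(nat \<Rightarrow> real) \<Rightarrow> nat \<Rightarrow> nat \<Rightarrow> real \<Rightarrow> real" where
  "nodal c i a t =
     (if a = i then (c (Suc i) - t) / (c (Suc i) - c i) else (t - c i) / (c (Suc i) - c i))"

lemma nodal_affine: "nodal c i a t = nodal c i a 0 + (nodal c i a 1 - nodal c i a 0) * t"
  by (cases "c (Suc i) = c i") (auto simp: nodal_def field_simps)

lemma continuous_on_nodal [continuous_intros]:
  "continuous_on S f \<Longrightarrow> continuous_on S (\<lambda>x. nodal c i a (f x))"
  by (subst nodal_affine) (intro continuous_intros)

lemma nodal_nonneg: "c i \<le> t \<Longrightarrow> t \<le> c (Suc i) \<Longrightarrow> 0 \<le> nodal c i a t"
  by (simp add: nodal_def)

lemma nodal_midpoint: "c i < c (Suc i) \<Longrightarrow> nodal c i a ((c i + c (Suc i)) / 2) = 1 / 2"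
  by (simp add: nodal_def field_simps)

lemma nodal_partition: "c i < c (Suc i) \<Longrightarrow> nodal c i i t + nodal c i (Suc i) t = 1"
  by (simp add: nodal_def add_divide_distrib[symmetric])

lemma nodal_reproduces:
  assumes "c i < c (Suc i)"
  shows "c i * nodal c i i t + c (Suc i) * nodal c i (Suc i) t = t"
proof -
  have d: "c (Suc i) - c i \<noteq> 0"
    using assms by simp
  have "c i * nodal c i i t + c (Suc i) * nodal c i (Suc i) t
      = (c i * (c (Suc i) - t) + c (Suc i) * (t - c i)) / (c (Suc i) - c i)"
    by (simp add: nodal_def add_divide_distrib)
  also have "\<dots> = t * (c (Suc i) - c i) / (c (Suc i) - c i)"
    by (rule arg_cong[where f = "\<lambda>x. x / _"]) (simp add: algebra_simps)
  also have "\<dots> = t"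
    using d by simp
  finally show ?thesis .
qed

lemma bilinear_nodal_interpolation:
  assumes c: "c1 i < c1 (Suc i)" "c3 k < c3 (Suc k)"
  shows "b1 + b2 * y3 + b3 * y1 + b4 * y3 * y1 = (\<Sum>a\<in>{i, Suc i}. \<Sum>b\<in>{k, Suc k}.
      (b1 + b2 * c3 b + b3 * c1 a + b4 * c3 b * c1 a) * nodal c1 i a y1 * nodal c3 k b y3)"
proof -
  let ?N0 = "nodal c1 i i y1" and ?N1 = "nodal c1 i (Suc i) y1"
  let ?M0 = "nodal c3 k k y3" and ?M1 = "nodal c3 k (Suc k) y3"
  have "b1 + b2 * y3 + b3 * y1 + b4 * y3 * y1
    = b1 * (?N0 + ?N1) * (?M0 + ?M1) + b2 * (?N0 + ?N1) * (c3 k * ?M0 + c3 (Suc k) * ?M1)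
      + b3 * (c1 i * ?N0 + c1 (Suc i) * ?N1) * (?M0 + ?M1)
      + b4 * (c3 k * ?M0 + c3 (Suc k) * ?M1) * (c1 i * ?N0 + c1 (Suc i) * ?N1)"
    unfolding nodal_partition[OF c(1)] nodal_partition[OF c(2)]
      nodal_reproduces[OF c(1)] nodal_reproduces[OF c(2)] by simp
  also have "\<dots> = (\<Sum>a\<in>{i, Suc i}. \<Sum>b\<in>{k, Suc k}.
      (b1 + b2 * c3 b + b3 * c1 a + b4 * c3 b * c1 a) * nodal c1 i a y1 * nodal c3 k b y3)"
    by (simp add: algebra_simps)
  finally show ?thesis .
qed

lemma (in strict_grid) nodal_grid_nodes [simp]:
  "k < Nn m \<Longrightarrow> a = k \<Longrightarrow> nodal (G m) k a (G m k) = 1"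
  "k < Nn m \<Longrightarrow> a \<noteq> k \<Longrightarrow> nodal (G m) k a (G m (Suc k)) = 1"
  "a = k \<Longrightarrow> nodal (G m) k a (G m (Suc k)) = 0"
  "a \<noteq> k \<Longrightarrow> nodal (G m) k a (G m k) = 0"
  using strict[of k m] by (simp_all add: nodal_def)

section \<open>Lowest order Nedelec polynomials\<close>

lemma ned_poly_zero: "ned_poly (\<lambda>_. 0)"
  unfolding ned_poly_def by (rule exI[of _ 0])+ (simp add: vec_eq_iff forall_3)

lemma ned_poly_axis2_bilinear:
  "ned_poly (\<lambda>y. ((A + B * y$1) * (C + D * y$3)) *\<^sub>R axis 2 1)"
proof -
  have "((A + B * y$1) * (C + D * y$3)) *\<^sub>R axis 2 1 = (vector
      [0 + 0 * y$2 + 0 * y$3 + 0 * y$2 * y$3,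
       A * C + (A * D) * y$3 + (B * C) * y$1 + (B * D) * y$3 * y$1,
       0 + 0 * y$1 + 0 * y$2 + 0 * y$1 * y$2] :: real^3)" for y :: "real^3"
    by (simp add: vec_eq_iff forall_3 axis_def algebra_simps)
  then show ?thesis unfolding ned_poly_def by blast
qed

lemma continuous_on_ned_poly_nth:
  assumes "ned_poly P"
  shows "continuous_on S (\<lambda>y. P y $ n)"
proof -
  obtain a1 a2 a3 a4 b1 b2 b3 b4 c1 c2 c3 c4 :: real where P: "\<And>y. P y = vector
      [a1 + a2 * y$2 + a3 * y$3 + a4 * y$2 * y$3, b1 + b2 * y$3 + b3 * y$1 + b4 * y$3 * y$1,
       c1 + c2 * y$1 + c3 * y$2 + c4 * y$1 * y$2]"
    using assms unfolding ned_poly_def by blast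
  consider "n = 1" | "n = 2" | "n = 3" using exhaust_3 by blast
  then show ?thesis by cases (simp_all add: P continuous_intros)
qed

lemma ned_poly_nth2_interpolation:
  assumes P: "ned_poly P" and c: "c1 i < c1 (Suc i)" "c3 k < c3 (Suc k)"
    and z: "\<And>a b. z a b $ 1 = c1 a" "\<And>a b. z a b $ 3 = c3 b"
  shows "P y $ 2 = (\<Sum>a\<in>{i, Suc i}. \<Sum>b\<in>{k, Suc k}.
           P (z a b) $ 2 * nodal c1 i a (y$1) * nodal c3 k b (y$3))"
proof -
  obtain a1 a2 a3 a4 b1 b2 b3 b4 c1' c2 c3' c4 :: real where Pf: "\<And>y. P y = vector
      [a1 + a2 * y$2 + a3 * y$3 + a4 * y$2 * y$3, b1 + b2 * y$3 + b3 * y$1 + b4 * y$3 * y$1,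
       c1' + c2 * y$1 + c3' * y$2 + c4 * y$1 * y$2]"
    using P unfolding ned_poly_def by blast
  have "P y $ 2 = b1 + b2 * y$3 + b3 * y$1 + b4 * y$3 * y$1"
    by (simp add: Pf)
  also have "\<dots> = (\<Sum>a\<in>{i, Suc i}. \<Sum>b\<in>{k, Suc k}.
      (b1 + b2 * c3 b + b3 * c1 a + b4 * c3 b * c1 a) * nodal c1 i a (y$1) * nodal c3 k b (y$3))"
    by (rule bilinear_nodal_interpolation[OF c])
  also have "\<dots> = (\<Sum>a\<in>{i, Suc i}. \<Sum>b\<in>{k, Suc k}.
      P (z a b) $ 2 * nodal c1 i a (y$1) * nodal c3 k b (y$3))"
    by (simp add: Pf z)
  finally show ?thesis .
qed

lemma curl3_nth1_eq:
  fixes u P :: "real^3 \<Rightarrow> real^3"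
  assumes S: "open S" "x \<in> S" and u: "\<And>y. y \<in> S \<Longrightarrow> u y = P y"
    and P: "\<And>y. P y = vector
      [a1 + a2 * y$2 + a3 * y$3 + a4 * y$2 * y$3, b1 + b2 * y$3 + b3 * y$1 + b4 * y$3 * y$1,
       c1 + c2 * y$1 + c3 * y$2 + c4 * y$1 * y$2]"
  shows "curl3 u x $ 1 = (c3 + c4 * x$1) - (b2 + b4 * x$1)"
proof -
  have near: "\<forall>\<^sub>F t in nhds 0. x + t *\<^sub>R axis j 1 \<in> S" for j
  proof -
    have "((\<lambda>t::real. x + t *\<^sub>R axis j 1) \<longlongrightarrow> x) (nhds 0)"
      by (auto intro!: tendsto_eq_intros filterlim_ident)
    then show ?thesis using S by (rule topological_tendstoD)
  qed
  have "pderiv3 u 3 2 x = deriv (\<lambda>t. c1 + c2 * x$1 + c3 * (x$2 + t) + c4 * x$1 * (x$2 + t)) 0"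
    unfolding pderiv3_def
    by (rule deriv_cong_ev) (use near[of 2] in \<open>auto elim!: eventually_mono simp: u P axis_def\<close>)
  also have "\<dots> = c3 + c4 * x$1"
    by (rule DERIV_imp_deriv) (auto intro!: derivative_eq_intros)
  finally have d32: "pderiv3 u 3 2 x = c3 + c4 * x$1" .
  have "pderiv3 u 2 3 x = deriv (\<lambda>t. b1 + b2 * (x$3 + t) + b3 * x$1 + b4 * (x$3 + t) * x$1) 0"
    unfolding pderiv3_def
    by (rule deriv_cong_ev) (use near[of 3] in \<open>auto elim!: eventually_mono simp: u P axis_def\<close>)
  also have "\<dots> = b2 + b4 * x$1"
    by (rule DERIV_imp_deriv) (auto intro!: derivative_eq_intros)
  finally show ?thesis using d32 by (simp add: curl3_def)
qed

text \<open>The first curl component of a Nedelec polynomial is affine in \<open>x$1\<close>; vanishing on a box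
  makes it vanish identically, which is a discrete Stokes identity on every face \<open>x$1 = const\<close>.\<close>
lemma ned_poly_circulation:
  assumes P: "ned_poly P" and box: "\<And>m. lo$m < hi$m"
    and u: "\<And>x. x \<in> box lo hi \<Longrightarrow> u x = P x"
    and curl: "\<And>x. x \<in> box lo hi \<Longrightarrow> curl3 u x $ 1 = 0"
    and x1: "y1$1 = y0$1" "z0$1 = y0$1" "z1$1 = y0$1"
  shows "(P y1 $ 2 - P y0 $ 2) * (z1$2 - z0$2) = (P z1 $ 3 - P z0 $ 3) * (y1$3 - y0$3)"
proof -
  obtain a1 a2 a3 a4 b1 b2 b3 b4 c1 c2 c3 c4 :: real where Pf: "\<And>y. P y = vector
      [a1 + a2 * y$2 + a3 * y$3 + a4 * y$2 * y$3, b1 + b2 * y$3 + b3 * y$1 + b4 * y$3 * y$1,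
       c1 + c2 * y$1 + c3 * y$2 + c4 * y$1 * y$2]"
    using P unfolding ned_poly_def by blast
  define pt where "pt t = (\<chi> m. if m = 1 then t else (lo$m + hi$m) / 2)" for t
  have pt_box: "pt t \<in> box lo hi" if "lo$1 < t" "t < hi$1" for t
    using that box by (auto simp: pt_def mem_box_cart)
  have affine0: "c3 + c4 * t = b2 + b4 * t" if "lo$1 < t" "t < hi$1" for t
    using curl[OF pt_box[OF that]] curl3_nth1_eq[OF open_box pt_box[OF that] u Pf]
    by (simp add: pt_def)
  define t0 t1 where "t0 = (2 * lo$1 + hi$1) / 3" and "t1 = (lo$1 + 2 * hi$1) / 3"
  have "lo$1 < t0" "t0 < t1" "t1 < hi$1"
    using box[of 1] by (simp_all add: t0_def t1_def)
  then have "t0 \<noteq> t1" "c3 + c4 * t0 = b2 + b4 * t0" "c3 + c4 * t1 = b2 + b4 * t1"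
    by (auto intro: affine0)
  then have "(c4 - b4) * (t0 - t1) = 0" by (simp add: algebra_simps)
  with \<open>t0 \<noteq> t1\<close> \<open>c3 + c4 * t0 = b2 + b4 * t0\<close> have "c4 = b4" "c3 = b2" by auto
  then show ?thesis by (simp add: Pf x1 algebra_simps)
qed

section \<open>Integrals over boxes\<close>

lemma integral_sum_restrict_boxes:
  fixes g :: "'i \<Rightarrow> 'a::euclidean_space \<Rightarrow> real"
  assumes I: "finite I" and sub: "\<And>i. i \<in> I \<Longrightarrow> box (lo i) (hi i) \<subseteq> T"
    and g: "\<And>i. i \<in> I \<Longrightarrow> continuous_on (cbox (lo i) (hi i)) (g i)"
  shows "integral T (\<lambda>x. \<Sum>i\<in>I. if x \<in> box (lo i) (hi i) then g i x else 0)
       = (\<Sum>i\<in>I. integral (cbox (lo i) (hi i)) (g i))"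
proof -
  have restrict: "box (lo i) (hi i) \<inter> T = box (lo i) (hi i)" if "i \<in> I" for i
    using sub[OF that] by blast
  have int: "(\<lambda>x. if x \<in> box (lo i) (hi i) then g i x else 0) integrable_on T" if "i \<in> I" for i
  proof -
    have "g i integrable_on cbox (lo i) (hi i)"
      by (rule integrable_continuous[OF g[OF that]])
    then have "g i integrable_on box (lo i) (hi i) \<inter> T"
      by (simp only: restrict[OF that] integrable_on_open_interval)
    then show ?thesis
      by (simp only: integrable_restrict_Int)
  qed
  have "integral T (\<lambda>x. \<Sum>i\<in>I. if x \<in> box (lo i) (hi i) then g i x else 0)
      = (\<Sum>i\<in>I. integral T (\<lambda>x. if x \<in> box (lo i) (hi i) then g i x else 0))"
    by (rule integral_sum[OF I int])
  also have "\<dots> = (\<Sum>i\<in>I. integral (cbox (lo i) (hi i)) (g i))"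
  proof (rule sum.cong[OF refl])
    fix i assume "i \<in> I"
    have "integral T (\<lambda>x. if x \<in> box (lo i) (hi i) then g i x else 0)
        = integral (box (lo i) (hi i) \<inter> T) (g i)"
      by (rule Henstock_Kurzweil_Integration.integral_restrict_Int)
    also have "\<dots> = integral (cbox (lo i) (hi i)) (g i)"
      by (simp only: restrict[OF \<open>i \<in> I\<close>] integral_open_interval)
    finally show "integral T (\<lambda>x. if x \<in> box (lo i) (hi i) then g i x else 0)
        = integral (cbox (lo i) (hi i)) (g i)" .
  qed
  finally show ?thesis .
qed

lemma sum_integral_nonneg_eq_0_imp:
  fixes h :: "'i \<Rightarrow> 'a::euclidean_space \<Rightarrow> real"
  assumes I: "finite I" and h: "\<And>i. i \<in> I \<Longrightarrow> continuous_on (cbox (lo i) (hi i)) (h i)"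
    and nonneg: "\<And>i x. i \<in> I \<Longrightarrow> x \<in> cbox (lo i) (hi i) \<Longrightarrow> 0 \<le> h i x"
    and sum0: "(\<Sum>i\<in>I. integral (cbox (lo i) (hi i)) (h i)) = 0"
    and k: "k \<in> I" "box (lo k) (hi k) \<noteq> {}" and z: "z \<in> cbox (lo k) (hi k)"
  shows "h k z = 0"
proof -
  have nonneg_int: "0 \<le> integral (cbox (lo i) (hi i)) (h i)" if "i \<in> I" for i
    by (rule integral_nonneg[OF integrable_continuous[OF h[OF that]] nonneg[OF that]])
  have "\<forall>i\<in>I. integral (cbox (lo i) (hi i)) (h i) = 0"
    using sum_nonneg_eq_0_iff[OF I nonneg_int] sum0 by simp
  then have "integral (cbox (lo k) (hi k)) (h k) = 0"
    using k(1) by (rule bspec)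
  moreover have "integral (cbox (lo k) (hi k)) (h k) = 0 \<longleftrightarrow> (\<forall>x\<in>cbox (lo k) (hi k). h k x = 0)"
    using h[OF k(1)] k(2) nonneg[OF k(1)] by (rule integral_cbox_eq_0_iff)
  ultimately have "\<forall>x\<in>cbox (lo k) (hi k). h k x = 0"
    by simp
  then show ?thesis
    using z by (rule bspec)
qed

section \<open>The patch around the coarse edge\<close>

lemma ncD_simps [simp]: "ncD 1 = 1" "ncD 2 = 2" "ncD 3 = 2"
  by (simp_all add: ncD_def)

lemma nfD_simps [simp]: "nfD 1 = 2" "nfD 2 = 4" "nfD 3 = 4"
  by (simp_all add: nfD_def)

lemma vidx_simps [simp]: "vidx 1 = 1" "vidx 2 = 2" "vidx 3 = 2"
  by (simp_all add: vidx_def)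

lemma nfD_ge_2: "2 \<le> nfD m"
  by (simp add: nfD_def ncD_def)

lemma mem_cell_idx_nfD_iff: "nu \<in> cell_idx nfD \<longleftrightarrow> nu 1 < 2 \<and> nu 2 < 4 \<and> nu 3 < 4"
  by (simp add: cell_idx_def forall_3)

definition idx3 :: "nat \<Rightarrow> nat \<Rightarrow> nat \<Rightarrow> 3 \<Rightarrow> nat" where
  "idx3 a b c = (\<lambda>m. if m = 1 then a else if m = 2 then b else c)"

lemma idx3_simps [simp]: "idx3 a b c 1 = a" "idx3 a b c 2 = b" "idx3 a b c 3 = c"
  by (simp_all add: idx3_def)

text \<open>For \<open>j \<le> 1\<close>, the four fine cells of the coarse element \<open>\<lambda>_. 0\<close> between the fine grid
  planes \<open>j\<close> and \<open>Suc j\<close> in direction \<open>x$2\<close>; layer \<open>1\<close> touches the midpoint of \<open>E\<close>.\<close>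
definition layer :: "nat \<Rightarrow> (3 \<Rightarrow> nat) set" where
  "layer j = {nu. nu 1 \<le> 1 \<and> nu 2 = j \<and> nu 3 \<le> 1}"

lemma layer_eq: "layer j = (\<lambda>(a, b). idx3 a j b) ` ({..1} \<times> {..1})"
proof (intro equalityI subsetI)
  fix nu assume "nu \<in> layer j"
  then show "nu \<in> (\<lambda>(a, b). idx3 a j b) ` ({..1} \<times> {..1})"
    by (intro rev_image_eqI[of "(nu 1, nu 3)"]) (auto simp: layer_def idx3_def fun_eq_iff forall_3)
qed (auto simp: layer_def)

lemma finite_layer [simp]: "finite (layer j)"
  by (simp add: layer_eq)

lemma layer_subset_cell_idx: "j < 4 \<Longrightarrow> layer j \<subseteq> cell_idx nfD"
  by (auto simp: layer_def mem_cell_idx_nfD_iff)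

lemma mem_layer_cell_idx: "nu \<in> layer j \<Longrightarrow> j < 4 \<Longrightarrow> nu \<in> cell_idx nfD"
  using layer_subset_cell_idx by blast

locale edge_patch =
  fixes cb :: "3 \<Rightarrow> nat \<Rightarrow> real"
  assumes cb_strict: "\<And>m k. k < ncD m \<Longrightarrow> cb m k < cb m (Suc k)"
begin

abbreviation G :: "3 \<Rightarrow> nat \<Rightarrow> real" where
  "G \<equiv> \<lambda>m. refine (cb m)"

sublocale strict_grid G nfD
  by unfold_locales (auto simp: nfD_def intro: refine_strict cb_strict)

lemma G_coarse_nodes: "G m 0 = cb m 0" "G m 2 = cb m 1"
  by (simp_all add: refine_def)

lemma coarse0_mem_cell_idx: "(\<lambda>_. 0) \<in> cell_idx ncD"
  by (simp add: cell_idx_def ncD_def)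

lemma G_uniform: "G m 2 - G m 1 = G m 1 - G m 0"
  by (simp add: refine_def field_simps)

lemma gcell_coarse0: "gcell cb (\<lambda>_. 0) = cbox (gvert G (\<lambda>_. 0)) (gvert G (\<lambda>_. 2))"
proof -
  have "gvert cb (\<lambda>_. 0) = gvert G (\<lambda>_. 0)" "gvert cb (upper_idx (\<lambda>_. 0)) = gvert G (\<lambda>_. 2)"
    by (simp_all add: vec_eq_iff upper_idx_def G_coarse_nodes)
  then show ?thesis by (simp add: gcell_def)
qed

lemma G_le_2: "a \<le> b \<Longrightarrow> b \<le> 2 \<Longrightarrow> G m a \<le> G m b"
  using grid_le[of a b m] nfD_ge_2[of m] by linarith

lemma G_012: "G m 0 < G m 1" "G m 1 < G m 2"
  using strict[of 0 m] strict[of 1 m] nfD_ge_2[of m] by (simp_all add: numeral_2_eq_2)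

lemma gedge_subset_frontier_coarse0:
  assumes "\<And>k. nu k \<le> 2" "nu n \<le> 1" "m \<noteq> n" "nu m = 0 \<or> nu m = 2"
  shows "gedge G nu n \<subseteq> frontier (gcell cb (\<lambda>_. 0))"
proof -
  have "gedge G nu n \<subseteq> gcell cb (\<lambda>_. 0)"
    unfolding gcell_coarse0 gedge_def
  proof (rule closed_segment_subset)
    show "gvert G nu \<in> cbox (gvert G (\<lambda>_. 0)) (gvert G (\<lambda>_. 2))"
      using assms(1) by (auto simp: mem_box_cart intro: G_le_2)
    show "gvert G (nu(n := Suc (nu n))) \<in> cbox (gvert G (\<lambda>_. 0)) (gvert G (\<lambda>_. 2))"
      using assms(1,2) by (auto simp: mem_box_cart intro: G_le_2)
  qed (simp add: convex_box)
  moreover have "x \<notin> box (gvert G (\<lambda>_. 0)) (gvert G (\<lambda>_. 2))" if "x \<in> gedge G nu n" for x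
    using gedge_component[OF that assms(3)] assms(4) by (auto simp: mem_box_cart intro!: exI[of _ m])
  ultimately show ?thesis
    unfolding gcell_coarse0 frontier_cbox by blast
qed

lemma gcell_open_layer_subset:
  assumes "j \<le> 1" "nu \<in> layer j"
  shows "gcell_open G nu \<subseteq> gcell cb (\<lambda>_. 0)"
proof
  fix x assume x: "x \<in> gcell_open G nu"
  have le1: "nu m \<le> 1" for m
    using assms exhaust_3[of m] by (auto simp: layer_def)
  have "G m 0 \<le> x$m \<and> x$m \<le> G m 2" for m
  proof -
    have "G m (nu m) < x$m" "x$m < G m (Suc (nu m))"
      using x by (simp_all add: mem_gcell_open_iff)
    moreover have "G m 0 \<le> G m (nu m)" "G m (Suc (nu m)) \<le> G m 2"
      using le1[of m] by (simp_all add: G_le_2)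
    ultimately show ?thesis by linarith
  qed
  then show "x \<in> gcell cb (\<lambda>_. 0)"
    unfolding gcell_coarse0 by (simp add: mem_box_cart)
qed

definition hat13 :: "(3 \<Rightarrow> nat) \<Rightarrow> nat \<Rightarrow> nat \<Rightarrow> real^3 \<Rightarrow> real" where
  "hat13 nu a b y = nodal (G 1) (nu 1) a (y$1) * nodal (G 3) (nu 3) b (y$3)"

lemma continuous_on_hat13: "continuous_on S (hat13 nu a b)"
  unfolding hat13_def by (intro continuous_intros)

lemma hat13_nonneg: "y \<in> gcell G nu \<Longrightarrow> 0 \<le> hat13 nu a b y"
  unfolding hat13_def mem_gcell_iff by (intro mult_nonneg_nonneg nodal_nonneg) auto

lemma hat13_centre:
  assumes "nu \<in> cell_idx nfD"
  shows "hat13 nu a b (gcell_centre G nu) = 1 / 4"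
proof -
  have "G 1 (nu 1) < G 1 (Suc (nu 1))" "G 3 (nu 3) < G 3 (Suc (nu 3))"
    using assms strict[of "nu 1" 1] strict[of "nu 3" 3] by (simp_all add: mem_cell_idx_nfD_iff)
  then show ?thesis by (simp add: hat13_def gcell_centre_def nodal_midpoint)
qed

text \<open>The test functions of hypothesis (iii): \<open>s\<close> times the hat function of the fine edge
  in direction \<open>x$2\<close> from the vertex \<open>(1, j, 1)\<close>, cut off to layer \<open>j\<close>.\<close>
definition test_rep :: "nat \<Rightarrow> real \<Rightarrow> (3 \<Rightarrow> nat) \<Rightarrow> real^3 \<Rightarrow> real^3" where
  "test_rep j s nu y = (if nu \<in> layer j then (s * hat13 nu 1 1 y) *\<^sub>R axis 2 1 else 0)"

definition test_field :: "nat \<Rightarrow> real \<Rightarrow> real^3 \<Rightarrow> real^3" where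
  "test_field j s y = (\<Sum>nu\<in>layer j. if y \<in> gcell_open G nu then test_rep j s nu y else 0)"

lemma test_rep_nth:
  "test_rep j s nu y $ n = (if n = 2 \<and> nu \<in> layer j then s * hat13 nu 1 1 y else 0)"
  by (simp add: test_rep_def axis_def)

lemma ned_poly_test_rep: "ned_poly (test_rep j s nu)"
proof (cases "nu \<in> layer j")
  case True
  let ?n1 = "nodal (G 1) (nu 1) 1" and ?n3 = "nodal (G 3) (nu 3) 1"
  have "test_rep j s nu y = ((s * ?n1 0 + s * (?n1 1 - ?n1 0) * y$1)
      * (?n3 0 + (?n3 1 - ?n3 0) * y$3)) *\<^sub>R axis 2 1" for y
    using True unfolding test_rep_def hat13_def
      nodal_affine[of "G 1" "nu 1" 1 "y$1"] nodal_affine[of "G 3" "nu 3" 1 "y$3"]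
    by (simp add: algebra_simps)
  then have "test_rep j s nu = (\<lambda>y. ((s * ?n1 0 + s * (?n1 1 - ?n1 0) * y$1)
      * (?n3 0 + (?n3 1 - ?n3 0) * y$3)) *\<^sub>R axis 2 1)" ..
  then show ?thesis by (simp add: ned_poly_axis2_bilinear)
next
  case False
  then have "test_rep j s nu = (\<lambda>_. 0)" by (simp add: test_rep_def fun_eq_iff)
  then show ?thesis by (simp add: ned_poly_zero)
qed

lemma test_field_eq_rep:
  assumes "j < 4" "nu \<in> cell_idx nfD" "y \<in> gcell_open G nu"
  shows "test_field j s y = test_rep j s nu y"
proof -
  have "y \<in> gcell_open G mu \<longleftrightarrow> mu = nu" if "mu \<in> layer j" for mu
    using assms gcell_open_unique[of nu mu y] layer_subset_cell_idx[of j] that by blast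
  then have "test_field j s y = (\<Sum>mu\<in>layer j. if mu = nu then test_rep j s nu y else 0)"
    unfolding test_field_def by (intro sum.cong) auto
  also have "\<dots> = test_rep j s nu y"
    by (simp add: test_rep_def)
  finally show ?thesis .
qed

lemma test_rep_tangential_continuous:
  assumes nu: "nu \<in> cell_idx nfD" and mu: "nu(m := Suc (nu m)) \<in> cell_idx nfD"
    and x: "x \<in> gcell G nu" "x \<in> gcell G (nu(m := Suc (nu m)))" and "n \<noteq> m"
  shows "test_rep j s nu x $ n = test_rep j s (nu(m := Suc (nu m))) x $ n"
proof (cases "n = 2")
  case True
  have xm: "x$m = G m (Suc (nu m))"
    using x unfolding mem_gcell_iff by (metis fun_upd_same order_antisym)
  from True \<open>n \<noteq> m\<close> have m13: "m = 1 \<or> m = 3" using exhaust_3 by blast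
  then have "nu m < 3" using mu by (auto simp: mem_cell_idx_nfD_iff)
  then consider "nu m = 0" | "nu m = 1" | "nu m = 2" by linarith
  then show ?thesis
  proof cases
    case 1
    then have "nodal (G m) (nu m) 1 (x$m) = 1" "nodal (G m) (Suc (nu m)) 1 (x$m) = 1"
      using xm nfD_ge_2[of m] by simp_all
    moreover have "nu \<in> layer j \<longleftrightarrow> nu(m := Suc (nu m)) \<in> layer j"
      using m13 1 by (auto simp: layer_def)
    ultimately show ?thesis
      using m13 True by (auto simp: test_rep_nth hat13_def)
  next
    case 2
    then have "nodal (G m) (nu m) 1 (x$m) = 0"
      using xm nodal_grid_nodes(3)[of 1 "nu m" m] by simp
    moreover have "nu(m := Suc (nu m)) \<notin> layer j"
      using m13 2 by (auto simp: layer_def)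
    ultimately show ?thesis
      using m13 True by (auto simp: test_rep_nth hat13_def)
  next
    case 3
    then have "nu \<notin> layer j" "nu(m := Suc (nu m)) \<notin> layer j"
      using m13 by (auto simp: layer_def)
    then show ?thesis by (simp add: test_rep_nth)
  qed
qed (simp add: test_rep_nth)

lemma test_rep_outside_coarse0:
  assumes "j \<le> 1" "coarse_of nu \<noteq> (\<lambda>_. 0)"
  shows "test_rep j s nu = (\<lambda>_. 0)"
proof -
  have "nu \<notin> layer j"
    using assms by (auto simp: layer_def coarse_of_def fun_eq_iff forall_3)
  then show ?thesis by (simp add: test_rep_def fun_eq_iff)
qed

lemma test_rep_tangential_frontier:
  assumes "j \<le> 1" and x: "x \<in> gcell G nu" and xm: "x$m = cb m 0 \<or> x$m = cb m 1" and "n \<noteq> m"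
  shows "test_rep j s nu x $ n = 0"
proof (cases "n = 2 \<and> nu \<in> layer j")
  case True
  with \<open>n \<noteq> m\<close> have m13: "m = 1 \<or> m = 3" using exhaust_3 by blast
  with True have "nu m \<le> 1" by (auto simp: layer_def)
  moreover have "G m (nu m) \<le> x$m" "x$m \<le> G m (Suc (nu m))" "x$m = G m 0 \<or> x$m = G m 2"
    using x xm unfolding mem_gcell_iff G_coarse_nodes by auto
  ultimately consider "nu m = 0" "x$m = G m 0" | "nu m = 1" "x$m = G m (Suc (nu m))"
    using G_012[of m] by (auto simp: le_Suc_eq numeral_2_eq_2)
  then have "nodal (G m) (nu m) 1 (x$m) = 0"
    by cases (use nodal_grid_nodes(3)[of 1 "nu m" m] in simp_all)
  with True m13 show ?thesis
    by (auto simp: test_rep_nth hat13_def)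
qed (auto simp: test_rep_nth)

lemma in_NhT_test_field:
  assumes "j \<le> 1"
  shows "in_NhT cb nfD (\<lambda>_. 0) (test_rep j s) (test_field j s)"
  unfolding in_NhT_def ned_rep_def
  using assms ned_poly_test_rep test_field_eq_rep test_rep_tangential_continuous
    test_rep_outside_coarse0 test_rep_tangential_frontier
  by auto

end

section \<open>Nedelec fields on the patch satisfying (i)--(iii)\<close>

locale edge_patch_field = edge_patch +
  fixes pos :: "3 \<Rightarrow> bool"
    and u :: "real^3 \<Rightarrow> real^3"
    and p :: "(3 \<Rightarrow> nat) \<Rightarrow> real^3 \<Rightarrow> real^3"
  assumes Nh: "ned_rep (\<lambda>m. refine (cb m)) nfD p u"
    and i_in: "\<And>i. tang_on_edge (\<lambda>m. refine (cb m)) nfD p (tdir pos i) (e_in pos i) (-1)"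
    and i_out: "\<And>i. tang_on_edge (\<lambda>m. refine (cb m)) nfD p (tdir pos i) (e_out pos i) 1"
    and ii: "\<And>e. e \<in> edge_idx nfD \<Longrightarrow> e \<notin> range (e_in pos) \<Longrightarrow> e \<notin> range (e_out pos) \<Longrightarrow>
              gedge (\<lambda>m. refine (cb m)) (fst e) (snd e)
                \<subseteq> (\<Union>kappa \<in> cell_idx ncD. frontier (gcell cb kappa)) \<Longrightarrow>
              tang_on_edge (\<lambda>m. refine (cb m)) nfD p (axis (snd e) 1) e 0"
    and iii: "\<And>kappa q w. kappa \<in> cell_idx ncD \<Longrightarrow> in_NhT cb nfD kappa q w \<Longrightarrow>
              integral (gcell cb kappa) (\<lambda>x. u x \<bullet> w x) = 0"
begin

lemma ned_poly_rep: "nu \<in> cell_idx nfD \<Longrightarrow> ned_poly (p nu)"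
  using Nh by (simp add: ned_rep_def)

lemma u_eq_rep: "nu \<in> cell_idx nfD \<Longrightarrow> x \<in> gcell_open G nu \<Longrightarrow> u x = p nu x"
  using Nh by (simp add: ned_rep_def)

lemma rep_tangential_continuous:
  "nu \<in> cell_idx nfD \<Longrightarrow> nu(m := Suc (nu m)) \<in> cell_idx nfD \<Longrightarrow> x \<in> gcell G nu \<Longrightarrow>
    x \<in> gcell G (nu(m := Suc (nu m))) \<Longrightarrow> n \<noteq> m \<Longrightarrow> p nu x $ n = p (nu(m := Suc (nu m))) x $ n"
  using Nh unfolding ned_rep_def by blast

lemma rep_zero_on_frontier_edge:
  assumes nu: "\<forall>k. nu k \<le> 2" "nu n \<le> 1" and face: "m \<noteq> n" "nu m = 0 \<or> nu m = 2"
    and not_at_v: "nu \<noteq> vidx" "nu \<noteq> vidx(n := vidx n - 1)"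
    and mu: "mu \<in> cell_idx nfD" "\<forall>k. mu k \<le> nu k \<and> nu k \<le> Suc (mu k)" "nu n = mu n"
  shows "p mu (gvert G nu) $ n = 0"
proof -
  have "nu n < nfD n" "nu k \<le> nfD k" for k
    using nu nfD_ge_2[of n] nfD_ge_2[of k] by (auto intro: le_trans)
  then have "(nu, n) \<in> edge_idx nfD"
    by (simp add: edge_idx_def)
  moreover have "(nu, n) \<notin> range (e_in pos)" "(nu, n) \<notin> range (e_out pos)"
    using not_at_v by (auto simp: e_in_def e_out_def split: if_splits)
  moreover have "gedge G nu n \<subseteq> (\<Union>kappa \<in> cell_idx ncD. frontier (gcell cb kappa))"
    using gedge_subset_frontier_coarse0[OF _ nu(2) face] nu(1) coarse0_mem_cell_idx by blast
  ultimately have "tang_on_edge G nfD p (axis n 1) (nu, n) 0"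
    using ii by fastforce
  moreover have "gedge G nu n \<subseteq> gcell G mu"
    by (rule gedge_subset_gcell[OF mu])
  moreover have "gvert G nu \<in> gedge G nu n"
    by (simp add: gedge_def)
  ultimately show ?thesis
    using mu(1) by (auto simp: tang_on_edge_def inner_axis)
qed

lemma rep_on_edge_ending_at_v:
  assumes "mu \<in> cell_idx nfD" "\<forall>k. mu k \<le> idx3 1 1 2 k \<and> idx3 1 1 2 k \<le> Suc (mu k)" "mu 2 = 1"
  shows "p mu (gvert G (idx3 1 1 2)) $ 2 = -1"
proof -
  have "vidx(2 := 1) = idx3 1 1 2"
    by (simp add: fun_eq_iff forall_3)
  then have "pos 2 \<Longrightarrow> e_in pos 2 = (idx3 1 1 2, 2)" "\<not> pos 2 \<Longrightarrow> e_out pos 2 = (idx3 1 1 2, 2)"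
    by (simp_all add: e_in_def e_out_def)
  moreover have "gedge G (idx3 1 1 2) 2 \<subseteq> gcell G mu"
    using assms by (intro gedge_subset_gcell) auto
  moreover have "gvert G (idx3 1 1 2) \<in> gedge G (idx3 1 1 2) 2"
    by (simp add: gedge_def)
  ultimately show ?thesis
    using i_in[of 2] i_out[of 2] assms(1)
    by (cases "pos 2") (auto simp: tang_on_edge_def tdir_def inner_axis)
qed

text \<open>The tangential value of \<open>u\<close> on the fine edge in direction \<open>x$2\<close> from the vertex
  \<open>(1, j, 1)\<close>, the only edge of that direction in layer \<open>j\<close> not on the boundary of the
  coarse element.\<close>
definition inner_value :: "nat \<Rightarrow> real" where
  "inner_value j = p (idx3 0 j 0) (gvert G (idx3 1 j 1)) $ 2"

lemma inner_value_shared: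
  assumes "j \<le> 1" "nu \<in> layer j"
  shows "p nu (gvert G (idx3 1 j 1)) $ 2 = inner_value j"
proof -
  have cell: "idx3 a j b \<in> cell_idx nfD" if "a \<le> 1" "b \<le> 1" for a b
    using that assms(1) by (simp add: mem_cell_idx_nfD_iff)
  have vert: "gvert G (idx3 1 j 1) \<in> gcell G (idx3 a j b)" if "a \<le> 1" "b \<le> 1" for a b
    using that by (intro gvert_mem_gcell cell) (auto simp: forall_3)
  have step: "(idx3 a j b)(1 := Suc a) = idx3 (Suc a) j b" "(idx3 a j b)(3 := Suc b) = idx3 a j (Suc b)"
    for a b by (simp_all add: fun_eq_iff forall_3)
  have "p (idx3 0 j 0) (gvert G (idx3 1 j 1)) $ 2 = p (idx3 a j b) (gvert G (idx3 1 j 1)) $ 2"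
    if "a \<le> 1" "b \<le> 1" for a b
  proof -
    have "p (idx3 0 j 0) (gvert G (idx3 1 j 1)) $ 2 = p (idx3 1 j 0) (gvert G (idx3 1 j 1)) $ 2"
      "p (idx3 0 j 0) (gvert G (idx3 1 j 1)) $ 2 = p (idx3 0 j 1) (gvert G (idx3 1 j 1)) $ 2"
      "p (idx3 0 j 1) (gvert G (idx3 1 j 1)) $ 2 = p (idx3 1 j 1) (gvert G (idx3 1 j 1)) $ 2"
      using rep_tangential_continuous[of "idx3 0 j 0" 1 "gvert G (idx3 1 j 1)" 2]
        rep_tangential_continuous[of "idx3 0 j 0" 3 "gvert G (idx3 1 j 1)" 2]
        rep_tangential_continuous[of "idx3 0 j 1" 1 "gvert G (idx3 1 j 1)" 2]
        cell vert by (simp_all add: step)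
    with that show ?thesis by (auto simp: le_Suc_eq)
  qed
  moreover have "nu = idx3 (nu 1) j (nu 3)" "nu 1 \<le> 1" "nu 3 \<le> 1"
    using assms(2) by (auto simp: layer_def idx3_def fun_eq_iff forall_3)
  ultimately show ?thesis
    unfolding inner_value_def by metis
qed

lemma layer_corner_value:
  assumes j: "j \<le> 1" and nu: "nu \<in> layer j"
    and a: "a \<in> {nu 1, Suc (nu 1)}" and b: "b \<in> {nu 3, Suc (nu 3)}"
  shows "p nu (gvert G (idx3 a j b)) $ 2 =
    (if a = 1 \<and> b = 1 then inner_value j else if j = 1 \<and> a = 1 \<and> b = 2 then -1 else 0)"
proof -
  have cell: "nu \<in> cell_idx nfD" and nu13: "nu 1 \<le> 1" "nu 2 = j" "nu 3 \<le> 1"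
    using nu j by (auto simp: layer_def mem_cell_idx_nfD_iff)
  have around: "\<forall>k. nu k \<le> idx3 a j b k \<and> idx3 a j b k \<le> Suc (nu k)"
    using a b nu13 by (auto simp: forall_3)
  consider "a = 1" "b = 1" | "j = 1" "a = 1" "b = 2" | "a \<noteq> 1 \<or> b \<noteq> 1" "\<not> (j = 1 \<and> a = 1 \<and> b = 2)"
    by blast
  then show ?thesis
  proof cases
    case 1
    then show ?thesis using inner_value_shared[OF j nu] by simp
  next
    case 2
    then show ?thesis using rep_on_edge_ending_at_v[OF cell] around nu13 by auto
  next
    case 3
    let ?m = "if a \<noteq> 1 then 1 else 3 :: 3"
    have "p nu (gvert G (idx3 a j b)) $ 2 = 0"
    proof (rule rep_zero_on_frontier_edge[where m = ?m])
      show "idx3 a j b ?m = 0 \<or> idx3 a j b ?m = 2" "idx3 a j b \<noteq> vidx(2 := vidx 2 - 1)"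
        using 3 a b nu13 by (auto simp: fun_eq_iff forall_3)
    qed (use j a b nu13 cell around in \<open>auto simp: fun_eq_iff forall_3\<close>)
    with 3 show ?thesis by auto
  qed
qed

text \<open>On layer \<open>j\<close> the \<open>x$2\<close>-component of \<open>u\<close> is the bilinear interpolant of its values on
  the edges in direction \<open>x$2\<close>, all of which vanish by (ii) except the interior one and, in
  layer \<open>1\<close>, the one ending at \<open>v\<close>.\<close>
lemma layer_rep_nth2:
  assumes j: "j \<le> 1" and nu: "nu \<in> layer j"
  shows "p nu y $ 2 = inner_value j * hat13 nu 1 1 y - (if j = 1 \<and> nu 3 = 1 then hat13 nu 1 2 y else 0)"
proof -
  have cell: "nu \<in> cell_idx nfD"
    using nu j by (simp add: mem_layer_cell_idx)
  have "p nu y $ 2 = (\<Sum>a\<in>{nu 1, Suc (nu 1)}. \<Sum>b\<in>{nu 3, Suc (nu 3)}.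
      p nu (gvert G (idx3 a j b)) $ 2 * nodal (G 1) (nu 1) a (y$1) * nodal (G 3) (nu 3) b (y$3))"
    using cell by (intro ned_poly_nth2_interpolation ned_poly_rep strict) (auto simp: mem_cell_idx_nfD_iff)
  also have "\<dots> = (\<Sum>a\<in>{nu 1, Suc (nu 1)}. \<Sum>b\<in>{nu 3, Suc (nu 3)}.
      (if a = 1 \<and> b = 1 then inner_value j else if j = 1 \<and> a = 1 \<and> b = 2 then -1 else 0)
      * nodal (G 1) (nu 1) a (y$1) * nodal (G 3) (nu 3) b (y$3))"
    using layer_corner_value[OF j nu] by (intro sum.cong refl) simp
  also have "\<dots> = inner_value j * hat13 nu 1 1 y - (if j = 1 \<and> nu 3 = 1 then hat13 nu 1 2 y else 0)"
  proof -
    have "nu 1 = 0 \<or> nu 1 = 1" "nu 3 = 0 \<or> nu 3 = 1"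
      using nu by (auto simp: layer_def)
    then show ?thesis
      by (elim disjE) (simp_all add: hat13_def numeral_2_eq_2)
  qed
  finally show ?thesis .
qed

lemma layer_orthogonality:
  assumes j: "j \<le> 1"
  shows "(\<Sum>nu\<in>layer j. integral (gcell G nu) (\<lambda>y. p nu y $ 2 * (s * hat13 nu 1 1 y))) = 0"
proof -
  have cells: "nu \<in> cell_idx nfD" if "nu \<in> layer j" for nu
    using that j by (simp add: mem_layer_cell_idx)
  have "(\<Sum>nu\<in>layer j. integral (gcell G nu) (\<lambda>y. p nu y $ 2 * (s * hat13 nu 1 1 y)))
    = integral (gcell cb (\<lambda>_. 0)) (\<lambda>x. \<Sum>nu\<in>layer j.
      if x \<in> box (gvert G nu) (gvert G (upper_idx nu)) then p nu x $ 2 * (s * hat13 nu 1 1 x) else 0)"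
    unfolding gcell_def
    using gcell_open_layer_subset[OF j] cells
    by (intro integral_sum_restrict_boxes[symmetric])
      (auto simp: gcell_open_def gcell_def intro!: continuous_intros continuous_on_ned_poly_nth
        continuous_on_hat13 ned_poly_rep)
  also have "\<dots> = integral (gcell cb (\<lambda>_. 0)) (\<lambda>x. u x \<bullet> test_field j s x)"
    unfolding test_field_def inner_sum_right
    by (intro arg_cong[where f = "integral _"] ext sum.cong refl)
      (auto simp: u_eq_rep[OF cells] gcell_open_def test_rep_def inner_axis)
  also have "\<dots> = 0"
    by (rule iii[OF coarse0_mem_cell_idx in_NhT_test_field[OF j]])
  finally show ?thesis .
qed

lemma layer_integrand_vanishes_at_centre:
  assumes j: "j \<le> 1"
    and h: "\<And>mu y. mu \<in> layer j \<Longrightarrow> p mu y $ 2 * (s * hat13 mu 1 1 y) = h mu y"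
    and nonneg: "\<And>mu y. mu \<in> layer j \<Longrightarrow> y \<in> gcell G mu \<Longrightarrow> 0 \<le> h mu y"
    and nu: "nu \<in> layer j"
  shows "h nu (gcell_centre G nu) = 0"
proof -
  have cells: "mu \<in> cell_idx nfD" if "mu \<in> layer j" for mu
    using that j by (simp add: mem_layer_cell_idx)
  have h_eq: "h mu = (\<lambda>y. p mu y $ 2 * (s * hat13 mu 1 1 y))" if "mu \<in> layer j" for mu
    using h[OF that] by (simp add: fun_eq_iff)
  show ?thesis
  proof (rule sum_integral_nonneg_eq_0_imp[where lo = "\<lambda>mu. gvert G mu"
        and hi = "\<lambda>mu. gvert G (upper_idx mu)" and h = h and k = nu and z = "gcell_centre G nu",
        OF finite_layer])
    show "continuous_on (cbox (gvert G mu) (gvert G (upper_idx mu))) (h mu)" if "mu \<in> layer j" for mu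
      unfolding h_eq[OF that]
      by (intro continuous_intros continuous_on_ned_poly_nth continuous_on_hat13 ned_poly_rep cells that)
    show "0 \<le> h mu y" if "mu \<in> layer j" "y \<in> cbox (gvert G mu) (gvert G (upper_idx mu))" for mu y
      using nonneg that by (simp add: gcell_def)
    show "(\<Sum>mu\<in>layer j. integral (cbox (gvert G mu) (gvert G (upper_idx mu))) (h mu)) = 0"
      using layer_orthogonality[OF j, of s] h_eq by (simp add: gcell_def)
    show "box (gvert G nu) (gvert G (upper_idx nu)) \<noteq> {}"
      "gcell_centre G nu \<in> cbox (gvert G nu) (gvert G (upper_idx nu))"
      using gcell_centre_mem[OF cells[OF nu]] box_subset_cbox by (auto simp: gcell_open_def)
  qed (rule nu)
qed

text \<open>Testing with the hat function of the interior edge of layer \<open>0\<close> makes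
  \<open>inner_value 0\<close> times that hat function orthogonal to itself.\<close>
lemma inner_value_0_eq_0: "inner_value 0 = 0"
proof -
  have "(inner_value 0 * hat13 (idx3 0 0 0) 1 1 (gcell_centre G (idx3 0 0 0)))\<^sup>2 = 0"
  proof (rule layer_integrand_vanishes_at_centre[where s = "inner_value 0"
        and h = "\<lambda>mu y. (inner_value 0 * hat13 mu 1 1 y)\<^sup>2" and nu = "idx3 0 0 0"])
    show "p mu y $ 2 * (inner_value 0 * hat13 mu 1 1 y) = (inner_value 0 * hat13 mu 1 1 y)\<^sup>2"
      if "mu \<in> layer 0" for mu y
      using layer_rep_nth2[OF _ that, of y] by (simp add: power2_eq_square)
  qed (simp_all add: layer_def)
  then show ?thesis
    by (simp add: hat13_centre mem_cell_idx_nfD_iff)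
qed

text \<open>Otherwise, in layer \<open>1\<close>, the hat function of the edge ending at \<open>v\<close> would be orthogonal
  to that of the interior edge.\<close>
lemma inner_value_1_neq_0: "inner_value 1 \<noteq> 0"
proof
  assume zero: "inner_value 1 = 0"
  let ?c = "gcell_centre G (idx3 0 1 1)"
  have "(if idx3 0 1 1 3 = 1 then hat13 (idx3 0 1 1) 1 2 ?c * hat13 (idx3 0 1 1) 1 1 ?c else 0) = 0"
  proof (rule layer_integrand_vanishes_at_centre[where s = "- 1"
        and h = "\<lambda>mu y. if mu 3 = 1 then hat13 mu 1 2 y * hat13 mu 1 1 y else 0" and nu = "idx3 0 1 1"])
    show "p mu y $ 2 * (- 1 * hat13 mu 1 1 y) = (if mu 3 = 1 then hat13 mu 1 2 y * hat13 mu 1 1 y else 0)"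
      if "mu \<in> layer 1" for mu y
      using layer_rep_nth2[OF _ that, of y] zero by simp
    show "0 \<le> (if mu 3 = 1 then hat13 mu 1 2 y * hat13 mu 1 1 y else 0)"
      if "mu \<in> layer 1" "y \<in> gcell G mu" for mu y
      using hat13_nonneg[OF that(2)] by (simp add: mult_nonneg_nonneg)
  qed (simp_all add: layer_def)
  then show False
    by (simp add: hat13_centre mem_cell_idx_nfD_iff)
qed

lemma stokes_midplane_face:
  assumes curl: "\<forall>nu \<in> cell_idx nfD. \<forall>x \<in> gcell_open G nu. curl3 u x = 0" and j: "j \<le> 1"
  shows "(p (idx3 0 j 0) (gvert G (idx3 1 j 1)) $ 2 - p (idx3 0 j 0) (gvert G (idx3 1 j 0)) $ 2)
      * (G 2 (Suc j) - G 2 j)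
    = (p (idx3 0 j 0) (gvert G (idx3 1 (Suc j) 0)) $ 3 - p (idx3 0 j 0) (gvert G (idx3 1 j 0)) $ 3)
      * (G 3 1 - G 3 0)"
proof -
  let ?nu = "idx3 0 j 0"
  have nu: "?nu \<in> cell_idx nfD"
    using j by (simp add: mem_cell_idx_nfD_iff)
  have "(p ?nu (gvert G (idx3 1 j 1)) $ 2 - p ?nu (gvert G (idx3 1 j 0)) $ 2)
      * (gvert G (idx3 1 (Suc j) 0) $ 2 - gvert G (idx3 1 j 0) $ 2)
    = (p ?nu (gvert G (idx3 1 (Suc j) 0)) $ 3 - p ?nu (gvert G (idx3 1 j 0)) $ 3)
      * (gvert G (idx3 1 j 1) $ 3 - gvert G (idx3 1 j 0) $ 3)"
  proof (rule ned_poly_circulation[OF ned_poly_rep[OF nu],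
        where lo = "gvert G ?nu" and hi = "gvert G (upper_idx ?nu)"])
    show "gvert G ?nu $ m < gvert G (upper_idx ?nu) $ m" for m
      using strict[of "?nu m" m] nu by (simp add: upper_idx_def cell_idx_def)
    show "u x = p ?nu x" "curl3 u x $ 1 = 0" if "x \<in> box (gvert G ?nu) (gvert G (upper_idx ?nu))" for x
      using u_eq_rep[OF nu] curl nu that by (simp_all add: gcell_open_def)
  qed simp_all
  then show ?thesis by simp
qed

lemma midplane_x3_value_shared:
  "p (idx3 0 1 0) (gvert G (idx3 1 1 0)) $ 3 = p (idx3 0 0 0) (gvert G (idx3 1 1 0)) $ 3"
proof -
  have up: "(idx3 0 0 0)(2 := Suc (idx3 0 0 0 2)) = idx3 0 1 0"
    by (simp add: fun_eq_iff forall_3)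
  have cells: "idx3 0 0 0 \<in> cell_idx nfD" "idx3 0 1 0 \<in> cell_idx nfD"
    by (simp_all add: mem_cell_idx_nfD_iff)
  have "gvert G (idx3 1 1 0) \<in> gcell G (idx3 0 0 0)"
    using cells(1) by (rule gvert_mem_gcell) (simp add: forall_3)
  moreover have "gvert G (idx3 1 1 0) \<in> gcell G (idx3 0 1 0)"
    using cells(2) by (rule gvert_mem_gcell) (simp add: forall_3)
  ultimately show ?thesis
    using rep_tangential_continuous[of "idx3 0 0 0" 2 "gvert G (idx3 1 1 0)" 3, unfolded up] cells
    by simp
qed

text \<open>The cells \<open>(0, 0, 0)\<close> and \<open>(0, 1, 0)\<close> share the value \<open>\<epsilon>\<close> of \<open>u\<close> on the edge in direction
  \<open>x$3\<close> from the vertex \<open>(1, 1, 0)\<close>, so Stokes gives \<open>inner_value 0 * h = \<epsilon> * h'\<close> and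
  \<open>inner_value 1 * h = - \<epsilon> * h'\<close>: the two layers have the same thickness \<open>h\<close> because the
  refinement is uniform.\<close>
lemma curl_free_inner_values:
  assumes curl: "\<forall>nu \<in> cell_idx nfD. \<forall>x \<in> gcell_open G nu. curl3 u x = 0"
  shows "inner_value 1 = - inner_value 0"
proof -
  define \<epsilon> where "\<epsilon> = p (idx3 0 0 0) (gvert G (idx3 1 1 0)) $ 3"
  have u2_at_100: "p (idx3 0 0 0) (gvert G (idx3 1 0 0)) $ 2 = 0"
    using layer_corner_value[of 0 "idx3 0 0 0" 1 0] by (simp add: layer_def)
  have u2_at_110: "p (idx3 0 1 0) (gvert G (idx3 1 1 0)) $ 2 = 0"
    using layer_corner_value[of 1 "idx3 0 1 0" 1 0] by (simp add: layer_def)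
  have u3_at_100: "p (idx3 0 0 0) (gvert G (idx3 1 0 0)) $ 3 = 0"
    by (rule rep_zero_on_frontier_edge[where m = 2]) (simp_all add: mem_cell_idx_nfD_iff fun_eq_iff forall_3)
  have u3_at_120: "p (idx3 0 1 0) (gvert G (idx3 1 2 0)) $ 3 = 0"
    by (rule rep_zero_on_frontier_edge[where m = 2]) (simp_all add: mem_cell_idx_nfD_iff fun_eq_iff forall_3)
  have shared: "p (idx3 0 1 0) (gvert G (idx3 1 1 0)) $ 3 = \<epsilon>"
    unfolding \<epsilon>_def by (rule midplane_x3_value_shared)
  have e0: "inner_value 0 * (G 2 1 - G 2 0) = \<epsilon> * (G 3 1 - G 3 0)"
    using stokes_midplane_face[OF curl le0]
    unfolding One_nat_def[symmetric] u2_at_100 u3_at_100 diff_zero inner_value_def \<epsilon>_def .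
  have e1: "inner_value 1 * (G 2 2 - G 2 1) = - \<epsilon> * (G 3 1 - G 3 0)"
    using stokes_midplane_face[OF curl order_refl]
    unfolding Suc_1 u2_at_110 u3_at_120 shared diff_zero diff_0 inner_value_def .
  have "(inner_value 1 + inner_value 0) * (G 2 1 - G 2 0)
      = inner_value 1 * (G 2 2 - G 2 1) + inner_value 0 * (G 2 1 - G 2 0)"
    by (simp only: G_uniform distrib_right)
  also have "\<dots> = 0"
    using e0 e1 by simp
  finally show ?thesis
    using G_012[of 2] by simp
qed

theorem curl_not_identically_zero:
  "\<exists>nu \<in> cell_idx nfD. \<exists>x \<in> gcell_open G nu. curl3 u x \<noteq> 0"
proof (rule ccontr)
  assume "\<not> ?thesis"
  then have "inner_value 1 = - inner_value 0"
    by (intro curl_free_inner_values) auto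
  with inner_value_0_eq_0 inner_value_1_neq_0 show False
    by simp
qed

end

theorem lemma4p1:
  fixes cb :: "3 \<Rightarrow> nat \<Rightarrow> real"
    and pos :: "3 \<Rightarrow> bool"
    and u :: "real^3 \<Rightarrow> real^3"
    and p :: "(3 \<Rightarrow> nat) \<Rightarrow> real^3 \<Rightarrow> real^3"
  assumes mono: "\<And>m k. k < ncD m \<Longrightarrow> cb m k < cb m (Suc k)"
    and Nh: "ned_rep (\<lambda>m. refine (cb m)) nfD p u"
    and i_in: "\<And>i. tang_on_edge (\<lambda>m. refine (cb m)) nfD p (tdir pos i) (e_in pos i) (-1)"
    and i_out: "\<And>i. tang_on_edge (\<lambda>m. refine (cb m)) nfD p (tdir pos i) (e_out pos i) 1"
    and ii: "\<And>e. e \<in> edge_idx nfD \<Longrightarrow> e \<notin> range (e_in pos) \<Longrightarrow> e \<notin> range (e_out pos) \<Longrightarrow>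
              gedge (\<lambda>m. refine (cb m)) (fst e) (snd e)
                \<subseteq> (\<Union>kappa \<in> cell_idx ncD. frontier (gcell cb kappa)) \<Longrightarrow>
              tang_on_edge (\<lambda>m. refine (cb m)) nfD p (axis (snd e) 1) e 0"
    and iii: "\<And>kappa q w. kappa \<in> cell_idx ncD \<Longrightarrow> in_NhT cb nfD kappa q w \<Longrightarrow>
              integral (gcell cb kappa) (\<lambda>x. u x \<bullet> w x) = 0"
  shows "\<exists>nu \<in> cell_idx nfD. \<exists>x \<in> gcell_open (\<lambda>m. refine (cb m)) nu. curl3 u x \<noteq> 0"
proof -
  interpret edge_patch_field cb pos u p
    using mono Nh i_in i_out ii iii
    unfolding edge_patch_field_def edge_patch_field_axioms_def edge_patch_def by blast
  show ?thesis
    by (rule curl_not_identically_zero)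
qed

end
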